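(* Let $r\in\mathbb{N}_0$ and $I=[-1,1]$. (i) If $\lambda\in(-1,1)$, then there exists $f\in C^r(I)$ with $f\equiv0$ on $[-1,\lambda]$ such that there is no $g\in C^{r+1}(I)$ satisfying $g^{(i)}(\lambda)=f^{(i)}(\lambda)$ for $0\le i\le\tilde r$ and $g\ge f$ on $(\lambda-\varepsilon,\lambda+\varepsilon)$ for some $\varepsilon>0$, where $\tilde r:=2\lfloor r/2\rfloor$ (i.e. $\tilde r=r-1$ if $r$ is odd and $\tilde r=r$ if $r$ is even). (ii) If $\lambda=\pm1$, then there exists $f\in C^r(I)$ such that there is no $g\in C^{r+1}(I)$ satisfying $g^{(i)}(\lambda)=f^{(i)}(\lambda)$ for $0\le i\le r$ and $g\ge f$ on $(\lambda-\varepsilon,\lambda+\varepsilon)\cap I$ for some $\varepsilon>0$. *)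

theory Defs
  imports "HOL-Analysis.Analysis"
begin

abbreviation I :: "real set" where "I \<equiv> {-1..1}"

text \<open>So f is C^r on S with
  f^(i) = D i on S.\<close>
definition Cr_derivs :: "nat \<Rightarrow> real set \<Rightarrow> (real \<Rightarrow> real) \<Rightarrow> (nat \<Rightarrow> real \<Rightarrow> real) \<Rightarrow> bool" where
  "Cr_derivs r S f D \<longleftrightarrow>
     (\<forall>x\<in>S. D 0 x = f x) \<and>
     (\<forall>i<r. \<forall>x\<in>S. (D i has_real_derivative D (Suc i) x) (at x within S)) \<and>
     (\<forall>i\<le>r. continuous_on S (D i))"

end

theory Submission
  imports Defs
begin

(* The witness is f(x) = ((x - l)_+)^(r + 1/2), and at an endpoint l the distance to l raised to
   r + 1/2: it is C^r, its derivatives up to order r vanish at l, and it is positive on one side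
   of l. If g is C^(r+1) with g^(i)(l) = 0 for i <= r, Taylor's theorem gives
   |g(x)| <= M |x - l|^(r+1), which is eventually smaller than |x - l|^(r+1/2), so g cannot lie
   above f near l. In (i) only the derivatives up to order 2 floor(r/2) are prescribed; for odd r,
   g >= f >= 0 near l forces g^(r)(l) = 0 as well, since otherwise g behaves like
   g^(r)(l) (x - l)^r / r!, which is negative on one side of l. *)

definition pos_part_powr :: "real \<Rightarrow> real \<Rightarrow> real" where
  "pos_part_powr a t = (if 0 < t then t powr a else 0)"

lemma pos_part_powr_nonneg: "0 \<le> pos_part_powr a t"
  by (simp add: pos_part_powr_def)

lemma pos_part_powr_zero [simp]: "pos_part_powr a 0 = 0"
  by (simp add: pos_part_powr_def)

lemma isCont_pos_part_powr:
  assumes "0 < a"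
  shows "isCont (pos_part_powr a) t"
proof -
  have "pos_part_powr a = (\<lambda>t. max t 0 powr a)"
    by (auto simp: pos_part_powr_def fun_eq_iff max_def)
  moreover have "isCont (\<lambda>t. max t 0 powr a) t"
    unfolding isCont_def
    by (rule tendsto_powr') (auto intro!: tendsto_intros assms simp: isCont_def[symmetric])
  ultimately show ?thesis
    by simp
qed

lemma has_real_derivative_pos_part_powr:
  assumes "1 < a"
  shows "(pos_part_powr a has_real_derivative a * pos_part_powr (a - 1) t) (at t)"
proof -
  consider "0 < t" | "t < 0" | "t = 0"
    by linarith
  then show ?thesis
  proof cases
    case 1
    have "((\<lambda>z. z powr a) has_real_derivative a * t powr (a - 1)) (at t)"
      by (rule has_real_derivative_powr[OF 1])
    then have "(pos_part_powr a has_real_derivative a * t powr (a - 1)) (at t)"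
      by (rule has_field_derivative_transform_within_open[where S = "{0<..}"])
         (use 1 in \<open>auto simp: pos_part_powr_def\<close>)
    then show ?thesis
      using 1 by (simp add: pos_part_powr_def)
  next
    case 2
    have "((\<lambda>z. 0) has_real_derivative 0) (at t)"
      by simp
    then have "(pos_part_powr a has_real_derivative 0) (at t)"
      by (rule has_field_derivative_transform_within_open[where S = "{..<0}"])
         (use 2 in \<open>auto simp: pos_part_powr_def\<close>)
    then show ?thesis
      using 2 by (simp add: pos_part_powr_def)
  next
    case 3
    have "\<forall>\<^sub>F h in at 0. pos_part_powr (a - 1) h = (pos_part_powr a (0 + h) - pos_part_powr a 0) / h"
      unfolding eventually_at_filter by (auto simp: pos_part_powr_def powr_diff)
    moreover have "(pos_part_powr (a - 1) \<longlongrightarrow> 0) (at 0)"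
      using isCont_pos_part_powr[of "a - 1" 0] assms by (simp add: isCont_def)
    ultimately have "((\<lambda>h. (pos_part_powr a (0 + h) - pos_part_powr a 0) / h) \<longlongrightarrow> 0) (at 0)"
      by (rule Lim_transform_eventually[rotated])
    then show ?thesis
      unfolding DERIV_def 3 by simp
  qed
qed

lemma Cr_derivs_pos_part_powr:
  assumes "real n < a"
  shows "Cr_derivs n UNIV (pos_part_powr a)
           (\<lambda>i t. (\<Prod>j<i. a - real j) * pos_part_powr (a - real i) t)"
  unfolding Cr_derivs_def
proof (intro conjI ballI allI impI)
  fix i t
  assume "i < n"
  then have "(pos_part_powr (a - real i) has_real_derivative
               (a - real i) * pos_part_powr (a - real i - 1) t) (at t)"
    using assms by (intro has_real_derivative_pos_part_powr) simp
  from DERIV_cmult[OF this, of "\<Prod>j<i. a - real j"]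
  show "((\<lambda>t. (\<Prod>j<i. a - real j) * pos_part_powr (a - real i) t) has_real_derivative
               (\<Prod>j<Suc i. a - real j) * pos_part_powr (a - real (Suc i)) t) (at t within UNIV)"
    by (simp add: field_simps)
next
  fix i
  assume "i \<le> n"
  then have "isCont (pos_part_powr (a - real i)) t" for t
    using assms by (intro isCont_pos_part_powr) simp
  then have "continuous_on UNIV (pos_part_powr (a - real i))"
    by (simp add: continuous_at_imp_continuous_on)
  then show "continuous_on UNIV (\<lambda>t. (\<Prod>j<i. a - real j) * pos_part_powr (a - real i) t)"
    by (rule continuous_on_mult_left)
qed simp

lemma Cr_derivs_affine_comp:
  assumes "Cr_derivs n UNIV f D"
  shows "Cr_derivs n S (\<lambda>x. f (s * (x - l))) (\<lambda>i x. s ^ i * D i (s * (x - l)))"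
  unfolding Cr_derivs_def
proof (intro conjI ballI allI impI)
  fix i x
  assume "i < n"
  then have "(D i has_real_derivative D (Suc i) (s * (x - l))) (at (s * (x - l)))"
    using assms by (simp add: Cr_derivs_def)
  moreover have "((\<lambda>x. s * (x - l)) has_real_derivative s) (at x)"
    by (auto intro!: derivative_eq_intros)
  ultimately have "((\<lambda>x. D i (s * (x - l))) has_real_derivative D (Suc i) (s * (x - l)) * s) (at x)"
    by (rule DERIV_chain2)
  then have "((\<lambda>x. s ^ i * D i (s * (x - l))) has_real_derivative
               s ^ i * (D (Suc i) (s * (x - l)) * s)) (at x)"
    by (rule DERIV_cmult)
  moreover have "s ^ i * (D (Suc i) (s * (x - l)) * s) = s ^ Suc i * D (Suc i) (s * (x - l))"
    by simp
  ultimately show "((\<lambda>x. s ^ i * D i (s * (x - l))) has_real_derivative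
               s ^ Suc i * D (Suc i) (s * (x - l))) (at x within S)"
    by (metis has_field_derivative_at_within)
next
  fix i
  assume "i \<le> n"
  then have "continuous_on UNIV (D i)"
    using assms by (simp add: Cr_derivs_def)
  moreover have "continuous_on S (\<lambda>x. s * (x - l))"
    by (intro continuous_intros)
  ultimately have "continuous_on S (\<lambda>x. D i (s * (x - l)))"
    by (rule continuous_on_compose2) auto
  then show "continuous_on S (\<lambda>x. s ^ i * D i (s * (x - l)))"
    by (rule continuous_on_mult_left)
qed (use assms in \<open>simp add: Cr_derivs_def\<close>)

lemma Cr_derivs_Taylor_bound:
  assumes "Cr_derivs (Suc n) S g D" "convex S" "compact S" "l \<in> S"
  obtains M where
    "\<And>x. x \<in> S \<Longrightarrow> \<bar>g x - (\<Sum>i\<le>n. D i l * (x - l) ^ i / fact i)\<bar> \<le> M * \<bar>x - l\<bar> ^ Suc n"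
proof -
  have "continuous_on S (D (Suc n))"
    using assms(1) by (simp add: Cr_derivs_def)
  then obtain B where B: "\<And>x. x \<in> S \<Longrightarrow> norm (D (Suc n) x) \<le> B"
    using continuous_on_compact_bound[OF assms(3)] by blast
  have "\<bar>g x - (\<Sum>i\<le>n. D i l * (x - l) ^ i / fact i)\<bar> \<le> B / fact n * \<bar>x - l\<bar> ^ Suc n"
    if "x \<in> S" for x
    using field_Taylor[of S n D B l x] assms B that by (auto simp: Cr_derivs_def)
  then show ?thesis
    by (rule that)
qed

lemma flat_Cr_derivs_below_powr:
  assumes g: "Cr_derivs (Suc n) S g D" and "convex S" "compact S" "l \<in> S"
    and flat: "\<forall>i\<le>n. D i l = 0"
  shows "\<forall>\<^sub>F x in at l within S. g x < \<bar>x - l\<bar> powr (real n + 1/2)"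
proof -
  obtain M where M: "\<And>x. x \<in> S \<Longrightarrow> \<bar>g x\<bar> \<le> M * \<bar>x - l\<bar> ^ Suc n"
    using Cr_derivs_Taylor_bound[OF assms(1-4)] flat by auto
  have "((\<lambda>x. M * sqrt \<bar>x - l\<bar>) \<longlongrightarrow> M * sqrt \<bar>l - l\<bar>) (at l within S)"
    by (intro tendsto_intros)
  then have "\<forall>\<^sub>F x in at l within S. M * sqrt \<bar>x - l\<bar> < 1"
    by (auto intro: order_tendstoD)
  moreover have "\<forall>\<^sub>F x in at l within S. x \<in> S"
    by (simp add: eventually_at_filter)
  moreover have "\<forall>\<^sub>F x in at l within S. x \<noteq> l"
    by (rule eventually_neq_at_within)
  ultimately show ?thesis
  proof eventually_elim
    case (elim x)
    define t where "t = \<bar>x - l\<bar>"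
    have t: "0 < t" "M * sqrt t < 1"
      using elim by (auto simp: t_def)
    have "g x \<le> M * t ^ Suc n"
      using M[of x] elim by (simp add: t_def)
    also have "\<dots> = (M * sqrt t) * (t ^ n * sqrt t)"
      using t by (simp add: algebra_simps)
    also have "\<dots> < t ^ n * sqrt t"
      using t by simp
    also have "\<dots> = t powr (real n + 1/2)"
      using t by (simp add: powr_add powr_realpow powr_half_sqrt)
    finally show ?case
      by (simp add: t_def)
  qed
qed

lemma flat_Cr_derivs_not_above_powr:
  assumes "Cr_derivs (Suc n) S g D" "convex S" "compact S" "l \<in> S" "\<forall>i\<le>n. D i l = 0"
    and "T \<subseteq> S" "at l within T \<noteq> bot"
  shows "\<not> (\<forall>\<^sub>F x in at l within T. \<bar>x - l\<bar> powr (real n + 1/2) \<le> g x)"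
proof
  assume "\<forall>\<^sub>F x in at l within T. \<bar>x - l\<bar> powr (real n + 1/2) \<le> g x"
  moreover have "\<forall>\<^sub>F x in at l within T. g x < \<bar>x - l\<bar> powr (real n + 1/2)"
    using flat_Cr_derivs_below_powr[OF assms(1-5)] by (rule filter_leD[OF at_le[OF \<open>T \<subseteq> S\<close>]])
  ultimately have "\<forall>\<^sub>F x in at l within T. False"
    by eventually_elim simp
  with \<open>at l within T \<noteq> bot\<close> show False
    by simp
qed

lemma odd_power_negative_side:
  fixes c l :: real
  assumes "odd n"
  obtains F where "F \<le> at l" "F \<noteq> bot"
    "\<forall>\<^sub>F x in F. c * (x - l) ^ n = - \<bar>c\<bar> * \<bar>x - l\<bar> ^ n"
proof (cases "0 < c")
  case True
  have "\<forall>\<^sub>F x in at_left l. x < l"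
    by (simp add: eventually_at_filter)
  then have "\<forall>\<^sub>F x in at_left l. c * (x - l) ^ n = - \<bar>c\<bar> * \<bar>x - l\<bar> ^ n"
  proof eventually_elim
    case (elim x)
    have "(x - l) ^ n = - (\<bar>x - l\<bar> ^ n)"
      using power_minus_odd[OF \<open>odd n\<close>, of "l - x"] elim by simp
    then show ?case
      using True by simp
  qed
  then show ?thesis
    by (intro that[of "at_left l"] at_le) simp_all
next
  case False
  have "\<forall>\<^sub>F x in at_right l. l < x"
    by (simp add: eventually_at_filter)
  then have "\<forall>\<^sub>F x in at_right l. c * (x - l) ^ n = - \<bar>c\<bar> * \<bar>x - l\<bar> ^ n"
    by eventually_elim (use False in simp)
  then show ?thesis
    by (intro that[of "at_right l"] at_le) simp_all
qed

lemma odd_order_derivative_eq_0_if_nonneg: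
  assumes g: "Cr_derivs (Suc n) {a..b} g D" and l: "a < l" "l < b" and "odd n"
    and lower: "\<forall>i<n. D i l = 0" and nonneg: "\<forall>\<^sub>F x in at l. 0 \<le> g x"
  shows "D n l = 0"
proof (rule ccontr)
  define c where "c = D n l"
  assume "D n l \<noteq> 0"
  then have "0 < \<bar>c\<bar>"
    by (simp add: c_def)
  have "(\<Sum>i\<le>n. D i l * (x - l) ^ i / fact i) = c * (x - l) ^ n / fact n" for x
    using lower by (simp add: c_def lessThan_Suc_atMost[symmetric])
  moreover have "l \<in> {a..b}"
    using l by simp
  ultimately obtain M where M: "\<And>x. x \<in> {a..b} \<Longrightarrow> \<bar>g x - c * (x - l) ^ n / fact n\<bar> \<le> M * \<bar>x - l\<bar> ^ Suc n"
    using Cr_derivs_Taylor_bound[OF g convex_real_interval(5) compact_Icc] by metis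
  obtain F where F: "F \<le> at l" "F \<noteq> bot"
    and side: "\<forall>\<^sub>F x in F. c * (x - l) ^ n = - \<bar>c\<bar> * \<bar>x - l\<bar> ^ n"
    using odd_power_negative_side[OF \<open>odd n\<close>] .
  have "((\<lambda>x. M * \<bar>x - l\<bar>) \<longlongrightarrow> M * \<bar>l - l\<bar>) (at l)"
    by (intro tendsto_intros)
  then have "\<forall>\<^sub>F x in at l. M * \<bar>x - l\<bar> < \<bar>c\<bar> / fact n"
    using \<open>0 < \<bar>c\<bar>\<close> by (auto intro: order_tendstoD)
  moreover have "\<forall>\<^sub>F x in at l. x \<in> {a..b}"
    using eventually_at_in_open'[of "{a<..<b}" l] l by (auto elim: eventually_mono)
  moreover have "\<forall>\<^sub>F x in at l. x \<noteq> l"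
    by (rule eventually_neq_at_within)
  ultimately have "\<forall>\<^sub>F x in at l. M * \<bar>x - l\<bar> < \<bar>c\<bar> / fact n \<and> x \<in> {a..b} \<and> x \<noteq> l \<and> 0 \<le> g x"
    using nonneg by eventually_elim blast
  then have "\<forall>\<^sub>F x in F. M * \<bar>x - l\<bar> < \<bar>c\<bar> / fact n \<and> x \<in> {a..b} \<and> x \<noteq> l \<and> 0 \<le> g x"
    by (rule filter_leD[OF F(1)])
  then have "\<forall>\<^sub>F x in F. False"
    using side
  proof eventually_elim
    case (elim x)
    define t where "t = \<bar>x - l\<bar>"
    have "0 < t ^ n" "M * t - \<bar>c\<bar> / fact n < 0"
      using elim by (auto simp: t_def)
    have "g x \<le> c * (x - l) ^ n / fact n + M * t ^ Suc n"
      using M[of x] elim by (simp add: t_def)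
    also have "\<dots> = (M * t - \<bar>c\<bar> / fact n) * t ^ n"
      using elim by (simp add: t_def algebra_simps)
    also have "\<dots> < 0"
      using \<open>M * t - \<bar>c\<bar> / fact n < 0\<close> \<open>0 < t ^ n\<close> by (rule mult_neg_pos)
    finally show False
      using elim by simp
  qed
  then show False
    using F(2) by (simp add: eventually_False)
qed

lemma Cr_derivs_flat_if_nonneg:
  assumes g: "Cr_derivs (Suc r) {a..b} g D" and l: "a < l" "l < b"
    and even_flat: "\<forall>i\<le>2 * (r div 2). D i l = 0" and nonneg: "\<forall>\<^sub>F x in at l. 0 \<le> g x"
  shows "\<forall>i\<le>r. D i l = 0"
proof (cases "even r")
  case True
  then show ?thesis
    using even_flat by simp
next
  case False
  then have lower: "\<forall>i<r. D i l = 0"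
    using even_flat by (auto elim!: oddE)
  then have "D r l = 0"
    using odd_order_derivative_eq_0_if_nonneg[OF g l False _ nonneg] by blast
  then show ?thesis
    using lower by (auto simp: le_less)
qed

lemma eventually_at_within_interval:
  fixes l :: real
  assumes "0 < \<epsilon>" "\<forall>x\<in>{l-\<epsilon><..<l+\<epsilon>} \<inter> S. P x"
  shows "\<forall>\<^sub>F x in at l within S. P x"
  unfolding eventually_at using assms by (auto simp: dist_real_def abs_less_iff)

lemma interior_point_no_Cr_Suc_majorant:
  fixes r :: nat and l :: real
  assumes l: "-1 < l" "l < 1"
  shows "\<exists>f Df. Cr_derivs r I f Df \<and> (\<forall>x\<in>{-1..l}. f x = 0) \<and>
           \<not> (\<exists>g Dg \<epsilon>. Cr_derivs (Suc r) I g Dg \<and>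
                  (\<forall>i\<le>2 * (r div 2). Dg i l = Df i l) \<and> \<epsilon> > 0 \<and>
                  (\<forall>x\<in>{l-\<epsilon><..<l+\<epsilon>} \<inter> I. g x \<ge> f x))"
proof -
  define a where "a = real r + 1/2"
  define f where "f = (\<lambda>x. pos_part_powr a (x - l))"
  define Df where "Df = (\<lambda>i x. (\<Prod>j<i. a - real j) * pos_part_powr (a - real i) (x - l))"
  have f: "Cr_derivs r I f Df"
    using Cr_derivs_affine_comp[OF Cr_derivs_pos_part_powr[of r a], of I 1 l]
    by (simp add: f_def Df_def a_def)
  have f_nonneg: "0 \<le> f x" for x
    by (simp add: f_def pos_part_powr_nonneg)
  have f_eq: "f x = \<bar>x - l\<bar> powr a" if "l \<le> x" for x
    using that by (simp add: f_def pos_part_powr_def)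
  have "\<not> (\<exists>g Dg \<epsilon>. Cr_derivs (Suc r) I g Dg \<and> (\<forall>i\<le>2 * (r div 2). Dg i l = Df i l) \<and>
            \<epsilon> > 0 \<and> (\<forall>x\<in>{l-\<epsilon><..<l+\<epsilon>} \<inter> I. g x \<ge> f x))"
  proof
    assume "\<exists>g Dg \<epsilon>. Cr_derivs (Suc r) I g Dg \<and> (\<forall>i\<le>2 * (r div 2). Dg i l = Df i l) \<and>
              \<epsilon> > 0 \<and> (\<forall>x\<in>{l-\<epsilon><..<l+\<epsilon>} \<inter> I. g x \<ge> f x)"
    then obtain g Dg \<epsilon> where g: "Cr_derivs (Suc r) I g Dg"
      and agree: "\<forall>i\<le>2 * (r div 2). Dg i l = Df i l" and "0 < \<epsilon>"
      and above: "\<forall>x\<in>{l-\<epsilon><..<l+\<epsilon>} \<inter> I. f x \<le> g x"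
      by blast
    have "\<forall>x\<in>{l-\<epsilon><..<l+\<epsilon>} \<inter> I. 0 \<le> g x"
      using above by (auto intro: order_trans[OF f_nonneg])
    then have "\<forall>\<^sub>F x in at l within I. 0 \<le> g x"
      by (rule eventually_at_within_interval[OF \<open>0 < \<epsilon>\<close>])
    moreover have "\<forall>i\<le>2 * (r div 2). Dg i l = 0"
      using agree by (simp add: Df_def)
    ultimately have flat: "\<forall>i\<le>r. Dg i l = 0"
      using Cr_derivs_flat_if_nonneg[OF g l] l by (simp add: at_within_Icc_at)
    have "\<forall>x\<in>{l-\<epsilon><..<l+\<epsilon>} \<inter> {l..1}. \<bar>x - l\<bar> powr a \<le> g x"
    proof
      fix x
      assume x: "x \<in> {l-\<epsilon><..<l+\<epsilon>} \<inter> {l..1}"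
      then have "x \<in> {l-\<epsilon><..<l+\<epsilon>} \<inter> I"
        using l by auto
      then have "f x \<le> g x"
        using above by blast
      then show "\<bar>x - l\<bar> powr a \<le> g x"
        using f_eq[of x] x by simp
    qed
    then have "\<forall>\<^sub>F x in at l within {l..1}. \<bar>x - l\<bar> powr a \<le> g x"
      by (rule eventually_at_within_interval[OF \<open>0 < \<epsilon>\<close>])
    moreover have "at l within {l..1} \<noteq> bot"
      using l by (simp add: at_within_Icc_at_right)
    ultimately show False
      using flat_Cr_derivs_not_above_powr[OF g convex_real_interval(5) compact_Icc, of l "{l..1}"] flat l
      by (auto simp: a_def)
  qed
  moreover have "\<forall>x\<in>{-1..l}. f x = 0"
    by (simp add: f_def pos_part_powr_def)
  ultimately show ?thesis
    using f by blast
qed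

lemma endpoint_no_Cr_Suc_majorant:
  fixes r :: nat and l :: real
  assumes l: "l = 1 \<or> l = -1"
  shows "\<exists>f Df. Cr_derivs r I f Df \<and>
           \<not> (\<exists>g Dg \<epsilon>. Cr_derivs (Suc r) I g Dg \<and>
                  (\<forall>i\<le>r. Dg i l = Df i l) \<and> \<epsilon> > 0 \<and>
                  (\<forall>x\<in>{l-\<epsilon><..<l+\<epsilon>} \<inter> I. g x \<ge> f x))"
proof -
  define a where "a = real r + 1/2"
  define f where "f = (\<lambda>x. pos_part_powr a (- l * (x - l)))"
  define Df where
    "Df = (\<lambda>i x. (- l) ^ i * ((\<Prod>j<i. a - real j) * pos_part_powr (a - real i) (- l * (x - l))))"
  have f: "Cr_derivs r I f Df"
    unfolding f_def Df_def a_def by (rule Cr_derivs_affine_comp[OF Cr_derivs_pos_part_powr]) simp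
  have f_eq: "f x = \<bar>x - l\<bar> powr a" if "x \<in> I" for x
  proof -
    have "- l * (x - l) = \<bar>x - l\<bar>"
      using l that by (auto simp: abs_if)
    then have "f x = pos_part_powr a \<bar>x - l\<bar>"
      by (simp only: f_def)
    then show ?thesis
      by (simp add: pos_part_powr_def)
  qed
  have "at l within I \<noteq> bot"
    using l by (auto simp: at_within_Icc_at_left at_within_Icc_at_right)
  have "\<not> (\<exists>g Dg \<epsilon>. Cr_derivs (Suc r) I g Dg \<and> (\<forall>i\<le>r. Dg i l = Df i l) \<and>
            \<epsilon> > 0 \<and> (\<forall>x\<in>{l-\<epsilon><..<l+\<epsilon>} \<inter> I. g x \<ge> f x))"
  proof
    assume "\<exists>g Dg \<epsilon>. Cr_derivs (Suc r) I g Dg \<and> (\<forall>i\<le>r. Dg i l = Df i l) \<and>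
              \<epsilon> > 0 \<and> (\<forall>x\<in>{l-\<epsilon><..<l+\<epsilon>} \<inter> I. g x \<ge> f x)"
    then obtain g Dg \<epsilon> where g: "Cr_derivs (Suc r) I g Dg"
      and agree: "\<forall>i\<le>r. Dg i l = Df i l" and "0 < \<epsilon>"
      and above: "\<forall>x\<in>{l-\<epsilon><..<l+\<epsilon>} \<inter> I. f x \<le> g x"
      by blast
    have "\<forall>x\<in>{l-\<epsilon><..<l+\<epsilon>} \<inter> I. \<bar>x - l\<bar> powr a \<le> g x"
      using above f_eq by auto
    then have "\<forall>\<^sub>F x in at l within I. \<bar>x - l\<bar> powr a \<le> g x"
      by (rule eventually_at_within_interval[OF \<open>0 < \<epsilon>\<close>])
    then show False
      using flat_Cr_derivs_not_above_powr[OF g convex_real_interval(5) compact_Icc, of l I]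
        \<open>at l within I \<noteq> bot\<close> agree l
      by (auto simp: Df_def a_def)
  qed
  then show ?thesis
    using f by blast
qed

theorem lemma3p1:
  fixes r :: nat
  shows "(\<forall>l::real. -1 < l \<and> l < 1 \<longrightarrow>
           (\<exists>f Df. Cr_derivs r I f Df \<and> (\<forall>x\<in>{-1..l}. f x = 0) \<and>
              \<not> (\<exists>g Dg \<epsilon>. Cr_derivs (Suc r) I g Dg \<and>
                     (\<forall>i\<le>2 * (r div 2). Dg i l = Df i l) \<and> \<epsilon> > 0 \<and>
                     (\<forall>x\<in>{l-\<epsilon><..<l+\<epsilon>} \<inter> I. g x \<ge> f x))))
       \<and> (\<forall>l::real. l = 1 \<or> l = -1 \<longrightarrow>
           (\<exists>f Df. Cr_derivs r I f Df \<and>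
              \<not> (\<exists>g Dg \<epsilon>. Cr_derivs (Suc r) I g Dg \<and>
                     (\<forall>i\<le>r. Dg i l = Df i l) \<and> \<epsilon> > 0 \<and>
                     (\<forall>x\<in>{l-\<epsilon><..<l+\<epsilon>} \<inter> I. g x \<ge> f x))))"
  using interior_point_no_Cr_Suc_majorant endpoint_no_Cr_Suc_majorant by blast

end
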